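(* Let $Z=\{\mathbf{z}_0,\dots,\mathbf{z}_{M-1}\}$ be a time series of $M$ observations of the SDE $(\ast)$ with $\theta=\theta_0$ on the time partition $\{t\}_M$. Let $\widehat{\theta}_M$ be the quasi-maximum likelihood (QML) estimator and $\widehat{\theta}_M(h)$ an order-$\beta$ QML estimator for the parameters of $(\ast)$ given $Z$ (both as defined in the context). Then $$\left|\widehat{\theta}_M(h)-\widehat{\theta}_M\right|\to 0 \quad\text{as } h\to 0 .$$ Moreover, $$E\left(\left|\widehat{\theta}_M(h)-\widehat{\theta}_M\right|\right)\to 0 \quad\text{as } h\to 0,$$ where the expectation is taken with respect to the measure on the underlying probability space generating the realizations of $(\ast)$ with $\theta=\theta_0$.
   Context: Let $(\Omega,\mathcal{F},P)$ be a complete probability space with an increasing right-continuous family $\{\mathcal{F}_t,\ t\ge t_0\}$ of complete sub-$\sigma$-algebras. Consider the $d$-dimensional diffusion $\mathbf{x}$ given by the SDE $$(\ast)\qquad d\mathbf{x}(t)=\mathbf{f}(t,\mathbf{x}(t);\theta)\,dt+\sum_{i=1}^m \mathbf{g}_i(t,\mathbf{x}(t);\theta)\,d\mathbf{w}^i(t),\quad t\ge t_0,$$ where $\mathbf{f},\mathbf{g}_i$ are differentiable, $\mathbf{w}=(\mathbf{w}^1,\dots,\mathbf{w}^m)$ is an $m$-dimensional $\mathcal{F}_t$-adapted standard Wiener process, and $\theta\in\mathcal{D}_\theta$, a compact subset of $\mathbb{R}^p$. Linear growth, uniform Lipschitz and smoothness conditions on $\mathbf{f},\mathbf{g}_i$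 ensuring existence and uniqueness of a strong solution with bounded moments are assumed for all $\theta\in\mathcal{D}_\theta$. Let $\mathbf{z}$ denote the solution with $\theta=\theta_0\in\mathcal{D}_\theta$, $\{t\}_M=\{t_0<t_1<\dots<t_{M-1}\}$ observation times, $\mathbf{z}_k$ the observation of $\mathbf{z}$ at $t_k$, and $Z=\{\mathbf{z}_0,\dots,\mathbf{z}_{M-1}\}$. Exact QML estimator: with $\mu_k=E(\mathbf{x}(t_k)\mid\mathbf{z}_{k-1})$ and $\Sigma_k=E(\mathbf{x}(t_k)\mathbf{x}^\top(t_k)\mid\mathbf{z}_{k-1})-\mu_k\mu_k^\top$ (computed for the solution of $(\ast)$ with parameter $\theta$), $$U_M(\theta,Z)=(M-1)\ln(2\pi)+\sum_{k=1}^{M-1}\Big[\ln\det\Sigma_k+(\mathbf{z}_k-\mu_k)^\top\Sigma_k^{-1}(\mathbf{z}_k-\mu_k)\Big],\qquad \widehat\theta_M=\arg\min_{\theta}U_M(\theta,Z).$$ Order-$\beta$ approximation: let $(\tau)_h=\{\tau_n:\tau_{n+1}-\tau_n\le h\}$ be a time discretization of $[t_0,t_{M-1}]$ with $(\tau)_h\supset\{t\}_M$, and $\mathbf{y}$ a continuous-time process on $[t_0,t_{M-1}]$ (obtained from a discretization of $(\ast)$ on $(\tau)_h$) with $E(\mathbf{y}(t_0)\mid\mathcal{F}_{t_0})=E(\mathbf{x}(t_0)\mid\mathcal{F}_{t_0})$, $E(\mathbf{y}(t_0)\mathbf{y}^\top(t_0)\mid\mathcal{F}_{t_0})=E(\mathbf{x}(t_0)\mathbf{x}^\top(t_0)\mid\mathcal{F}_{t_0})$,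 satisfying $E(|\mathbf{y}(t)|^{2q}\mid\mathcal{F}_{t_k})\le L$ for all $t\in[t_k,t_{k+1}]$, $q=1,2,\dots$, and $$\sup_{t_k\le t\le t_{k+1}}\big|E(g(\mathbf{x}(t))\mid\mathcal{F}_{t_k})-E(g(\mathbf{y}(t))\mid\mathcal{F}_{t_k})\big|\le L_k h^\beta$$ for all consecutive $t_k,t_{k+1}\in\{t\}_M$, all $\theta\in\mathcal{D}_\theta$ and all $g\in\mathcal{C}^{2(\beta+1)}_P(\mathbb{R}^d,\mathbb{R})$ (the $2(\beta+1)$ times continuously differentiable functions which, together with their partial derivatives up to that order, have polynomial growth), where $L,L_k>0$ are constants and $\beta\in\mathbb{N}_+$. The second conditional moment of $\mathbf{y}$ is assumed positive definite and continuous in $\theta\in\mathcal{D}_\theta$. Moreover $\mathbf{y}$ is restarted at observations: $E(\mathbf{y}(t_k)\mid\mathbf{z}_k)=\mathbf{z}_k$ and $E(\mathbf{y}(t_k)\mathbf{y}^\top(t_k)\mid\mathbf{z}_k)=\mathbf{z}_k\mathbf{z}_k^\top$ for all $t_k\in\{t\}_M$. Order-$\beta$ QML estimator: with $\mu_{h,k}=E(\mathbf{y}(t_k)\mid\mathbf{z}_{k-1})$, $\Sigma_{h,k}=E(\mathbf{y}(t_k)\mathbf{y}^\top(t_k)\mid\mathbf{z}_{k-1})-\mu_{h,k}\mu_{h,k}^\top$, $$U_{M,h}(\theta,Z)=(M-1)\ln(2\pi)+\sum_{k=1}^{M-1}\Big[\ln\det\Sigma_{h,k}+(\mathbf{z}_k-\mu_{h,k})^\top\Sigma_{h,k}^{-1}(\mathbf{z}_k-\mu_{h,k})\Big],\qquad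 \widehat\theta_M(h)=\arg\min_\theta U_{M,h}(\theta,Z),$$ where $h$ is the maximum stepsize of $(\tau)_h$. *)

theory Defs
  imports "HOL-Probability.Probability"
begin

definition poly_growth :: "(real^'d \<Rightarrow> real) \<Rightarrow> bool" where
  "poly_growth g \<longleftrightarrow> (\<exists>C q. \<forall>x. \<bar>g x\<bar> \<le> C * (1 + norm x ^ q))"

text \<open>D al is the iterated partial derivative along the list of coordinate directions al,
  with D (i # al) the partial derivative in direction i of D al.\<close>
definition CP :: "nat \<Rightarrow> (real^'d \<Rightarrow> real) \<Rightarrow> bool" where
  "CP n g \<longleftrightarrow> (\<exists>D :: 'd list \<Rightarrow> real^'d \<Rightarrow> real.
      D [] = g \<and>
      (\<forall>al i x. length al < n \<longrightarrow>
          ((\<lambda>s. D al (x + s *\<^sub>R axis i 1)) has_real_derivative D (i # al) x) (at 0)) \<and>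
      (\<forall>al. length al \<le> n \<longrightarrow> continuous_on UNIV (D al) \<and> poly_growth (D al)))"

definition mean_of :: "(real^'d) measure \<Rightarrow> real^'d" where
  "mean_of Q = (\<integral>x. x \<partial>Q)"

definition smom_of :: "(real^'d) measure \<Rightarrow> real^'d^'d" where
  "smom_of Q = (\<chi> i j. \<integral>x. x $ i * x $ j \<partial>Q)"

definition cov_of :: "(real^'d) measure \<Rightarrow> real^'d^'d" where
  "cov_of Q = smom_of Q - (\<chi> i j. mean_of Q $ i * mean_of Q $ j)"

definition posdef :: "real^'d^'d \<Rightarrow> bool" where
  "posdef A \<longleftrightarrow> transpose A = A \<and> (\<forall>v. v \<noteq> 0 \<longrightarrow> v \<bullet> (A *v v) > 0)"

definition mat_inverse :: "real^'d^'d \<Rightarrow> real^'d^'d" where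
  "mat_inverse A = (SOME B. A ** B = mat 1 \<and> B ** A = mat 1)"

text \<open>Gaussian quasi-log-likelihood (times -2) for observations zs 0 .. zs (Nobs-1),
  one-step predicted means mu k and covariances S k, k = 1 .. Nobs-1.\<close>
definition qml_U :: "nat \<Rightarrow> (nat \<Rightarrow> real^'d) \<Rightarrow> (nat \<Rightarrow> real^'d) \<Rightarrow> (nat \<Rightarrow> real^'d^'d) \<Rightarrow> real" where
  "qml_U Nobs zs mu S =
     real (Nobs - 1) * ln (2 * pi) +
     (\<Sum>k\<in>{1..<Nobs}. ln (det (S k)) + (zs k - mu k) \<bullet> (mat_inverse (S k) *v (zs k - mu k)))"

text \<open>Transition laws: PX th k s t is the law of x(t), t in [t_k, t_(k+1)], for the solution
  of the SDE with parameter th started at x(t_k) = s (i.e. the conditional law given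
  x(t_k) = s).\<close>
definition U_exact ::
  "(real^'p \<Rightarrow> nat \<Rightarrow> real^'d \<Rightarrow> real \<Rightarrow> (real^'d) measure) \<Rightarrow> (nat \<Rightarrow> real) \<Rightarrow> nat
   \<Rightarrow> real^'p \<Rightarrow> (nat \<Rightarrow> real^'d) \<Rightarrow> real" where
  "U_exact PX t Nobs th zs =
     qml_U Nobs zs (\<lambda>k. mean_of (PX th (k - 1) (zs (k - 1)) (t k)))
                   (\<lambda>k. cov_of (PX th (k - 1) (zs (k - 1)) (t k)))"

text \<open>Order-beta QML objective U_{M,h}(th, Z), with PY h th k s t the law of the
  approximation y(t) (maximal stepsize h), restarted at y(t_k) = s.\<close>
definition U_approx ::
  "(real \<Rightarrow> real^'p \<Rightarrow> nat \<Rightarrow> real^'d \<Rightarrow> real \<Rightarrow> (real^'d) measure) \<Rightarrow> (nat \<Rightarrow> real) \<Rightarrow> nat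
   \<Rightarrow> real \<Rightarrow> real^'p \<Rightarrow> (nat \<Rightarrow> real^'d) \<Rightarrow> real" where
  "U_approx PY t Nobs h th zs =
     qml_U Nobs zs (\<lambda>k. mean_of (PY h th (k - 1) (zs (k - 1)) (t k)))
                   (\<lambda>k. cov_of (PY h th (k - 1) (zs (k - 1)) (t k)))"

end

theory Submission
  imports Defs
begin

(* For fixed data, the estimators minimise U_{M,h} and U_M over the compact set Dth, and
   the exact estimator is the unique minimiser.  The proof has three parts.
   (1) Objective convergence: the weak-order bound, applied to the test functions
       x_i and x_i x_j (which lie in C_P^n for every n), shows that the first two moments
       of y approximate those of x at rate h^beta uniformly in theta.  Together with the
       continuity of the moments of x in theta this gives U_{M,h}(theta_h) -> U_M(theta)
       whenever h -> 0+ and theta_h -> theta; the objective is a continuous function of the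
       predicted means and covariances wherever the covariances are positive definite.
   (2) Argmin consistency: on a compact set, minimisers of objectives that converge in this
       joint sense converge to the unique minimiser of the limit (subsequence argument).
   (3) Convergence in mean: the estimators take values in the bounded set Dth, so dominated
       convergence turns pointwise convergence into convergence of E|theta_h - theta|. *)

(* Any other cluster point l would satisfy U l <= U x0. *)
lemma argmin_consistency:
  fixes V :: "nat \<Rightarrow> 'a::metric_space \<Rightarrow> real" and U :: "'a \<Rightarrow> real"
  assumes K: "compact K" and x0: "x0 \<in> K" and unique: "\<And>x. x \<in> K \<Longrightarrow> x \<noteq> x0 \<Longrightarrow> U x0 < U x"
    and xs_in: "\<And>n. xs n \<in> K" and xs_min: "\<And>n. V n (xs n) \<le> V n x0"
    and conv: "\<And>r l. strict_mono r \<Longrightarrow> l \<in> K \<Longrightarrow> (xs \<circ> r) \<longlonglongrightarrow> l \<Longrightarrow>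
                 (\<lambda>n. V (r n) (xs (r n))) \<longlonglongrightarrow> U l"
    and conv0: "(\<lambda>n. V n x0) \<longlonglongrightarrow> U x0"
  shows "xs \<longlonglongrightarrow> x0"
proof (rule ccontr)
  assume "\<not> xs \<longlonglongrightarrow> x0"
  then obtain e where "e > 0" and not_ev: "\<not> eventually (\<lambda>n. dist (xs n) x0 < e) sequentially"
    unfolding tendsto_iff by blast
  obtain r0 :: "nat \<Rightarrow> nat" where r0: "strict_mono r0" and "\<forall>n. \<not> dist (xs (r0 n)) x0 < e"
    using not_eventually_sequentiallyD[OF not_ev] by blast
  then have far: "\<And>n. e \<le> dist (xs (r0 n)) x0" by (simp add: not_less)
  obtain l r1 where l: "l \<in> K" and r1: "strict_mono r1" and lim: "((xs \<circ> r0) \<circ> r1) \<longlonglongrightarrow> l"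
    using compact_imp_seq_compact[OF K] xs_in unfolding seq_compact_def by (metis comp_apply)
  define r where "r = r0 \<circ> r1"
  have r: "strict_mono r" unfolding r_def using r0 r1 by (rule strict_mono_o)
  have lim_r: "(xs \<circ> r) \<longlonglongrightarrow> l" using lim unfolding r_def by (simp add: comp_assoc)
  have "e \<le> dist l x0"
    using LIMSEQ_le_const[OF tendsto_dist[OF lim_r tendsto_const]] far unfolding r_def by simp
  with \<open>e > 0\<close> have "l \<noteq> x0" by auto
  have "U l \<le> U x0"
    using LIMSEQ_le[OF conv[OF r l lim_r] LIMSEQ_subseq_LIMSEQ[OF conv0 r]] xs_min by (simp add: comp_def)
  with unique[OF l \<open>l \<noteq> x0\<close>] show False by simp
qed

lemma tendsto_integral_norm_diff_at_right:
  fixes X :: "real \<Rightarrow> 'w \<Rightarrow> 'b::{banach, second_countable_topology}"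
  assumes P: "finite_measure P" and K: "bounded K"
    and X_meas: "\<And>h. h > a \<Longrightarrow> X h \<in> borel_measurable P" and X0_meas: "X0 \<in> borel_measurable P"
    and X_in: "\<And>h w. h > a \<Longrightarrow> w \<in> space P \<Longrightarrow> X h w \<in> K"
    and X0_in: "\<And>w. w \<in> space P \<Longrightarrow> X0 w \<in> K"
    and lim: "\<And>w. w \<in> space P \<Longrightarrow> ((\<lambda>h. X h w) \<longlongrightarrow> X0 w) (at_right a)"
  shows "((\<lambda>h. \<integral>w. norm (X h w - X0 w) \<partial>P) \<longlongrightarrow> 0) (at_right a)"
proof (rule tendsto_at_right_sequentially[where b = "a + 1"])
  fix S :: "nat \<Rightarrow> real"
  assume S_gt: "\<And>n. a < S n" and "\<And>n. S n < a + 1" and "decseq S" and S_lim: "S \<longlonglongrightarrow> a"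
  obtain B where B: "\<And>y. y \<in> K \<Longrightarrow> norm y \<le> B"
    using K unfolding bounded_iff by blast
  have S_at_right: "filterlim S (at_right a) sequentially"
    using S_gt by (intro tendsto_imp_filterlim_at_right[OF S_lim]) simp
  have "(\<lambda>n. \<integral>w. norm (X (S n) w - X0 w) \<partial>P) \<longlonglongrightarrow> (\<integral>w. 0 \<partial>P)"
  proof (rule integral_dominated_convergence[where w = "\<lambda>_. 2 * B"])
    show "integrable P (\<lambda>_. 2 * B)"
      using P by (simp add: finite_measure.integrable_const)
    have "(\<lambda>n. norm (X (S n) w - X0 w)) \<longlonglongrightarrow> 0" if "w \<in> space P" for w
      using filterlim_compose[OF tendsto_norm_zero[OF LIM_zero[OF lim[OF that]]] S_at_right] .
    then show "AE w in P. (\<lambda>n. norm (X (S n) w - X0 w)) \<longlonglongrightarrow> 0"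
      by (rule AE_I2)
    show "AE w in P. norm (norm (X (S n) w - X0 w)) \<le> 2 * B" for n
    proof (rule AE_I2)
      fix w assume w: "w \<in> space P"
      have "norm (X (S n) w - X0 w) \<le> norm (X (S n) w) + norm (X0 w)"
        by (rule norm_triangle_ineq4)
      also have "\<dots> \<le> 2 * B" using B[OF X_in[OF S_gt[of n] w]] B[OF X0_in[OF w]] by linarith
      finally show "norm (norm (X (S n) w - X0 w)) \<le> 2 * B" by simp
    qed
  qed (use X_meas[OF S_gt] X0_meas in measurable)
  then show "(\<lambda>n. \<integral>w. norm (X (S n) w - X0 w) \<partial>P) \<longlonglongrightarrow> 0" by simp
qed simp

lemma tendsto_of_uniform_rate:
  fixes fX :: "'a \<Rightarrow> real" and fY :: "real \<Rightarrow> 'a \<Rightarrow> real"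
  assumes h: "(h \<longlongrightarrow> 0) F" "\<forall>\<^sub>F x in F. h x > 0" and th: "\<forall>\<^sub>F x in F. th x \<in> D"
    and lim: "((\<lambda>x. fX (th x)) \<longlongrightarrow> a) F"
    and rate: "\<And>y e. y \<in> D \<Longrightarrow> e > 0 \<Longrightarrow> \<bar>fX y - fY e y\<bar> \<le> L * e ^ beta" and beta: "beta \<ge> 1"
  shows "((\<lambda>x. fY (h x) (th x)) \<longlongrightarrow> a) F"
proof -
  have "((\<lambda>x. fX (th x) - fY (h x) (th x)) \<longlongrightarrow> 0) F"
  proof (rule Lim_null_comparison)
    show "\<forall>\<^sub>F x in F. norm (fX (th x) - fY (h x) (th x)) \<le> L * h x ^ beta"
      using h(2) th by eventually_elim (simp add: rate)
    have "((\<lambda>x. h x ^ beta) \<longlongrightarrow> 0) F"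
      using tendsto_power[OF h(1), of beta] beta by (simp add: power_0_left)
    then show "((\<lambda>x. L * h x ^ beta) \<longlongrightarrow> 0) F"
      by (rule tendsto_mult_right_zero)
  qed
  from tendsto_diff[OF lim this] show ?thesis by simp
qed

(* The determinant is a polynomial in the entries, hence continuous. *)
lemma tendsto_det:
  fixes A :: "'a \<Rightarrow> real^'n^'n"
  assumes "(A \<longlongrightarrow> A0) F"
  shows "((\<lambda>x. det (A x)) \<longlongrightarrow> det A0) F"
  unfolding det_def
  by (intro tendsto_sum tendsto_mult tendsto_const tendsto_prod tendsto_vec_nth assms)

lemma mat_inverse_mult_cramer:
  fixes A :: "real^'n^'n"
  assumes "det A \<noteq> 0"
  shows "mat_inverse A *v b = (\<chi> k. det (\<chi> i j. if j = k then b $ i else A $ i $ j) / det A)"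
proof -
  have "invertible A" using assms invertible_det_nz by blast
  then have "A ** mat_inverse A = mat 1 \<and> mat_inverse A ** A = mat 1"
    unfolding mat_inverse_def by (rule someI_ex[OF iffD1[OF invertible_def]])
  then have "A *v (mat_inverse A *v b) = b"
    by (simp add: matrix_vector_mul_assoc)
  then show ?thesis using cramer[OF assms] by blast
qed

(* By Cramer's rule, (A, v) |-> A^-1 v is continuous at every invertible A0. *)
lemma tendsto_mat_inverse_mult:
  fixes A :: "'a \<Rightarrow> real^'n^'n"
  assumes A: "(A \<longlongrightarrow> A0) F" and v: "(v \<longlongrightarrow> v0) F" and det0: "det A0 \<noteq> 0"
  shows "((\<lambda>x. mat_inverse (A x) *v v x) \<longlongrightarrow> mat_inverse A0 *v v0) F"
proof -
  let ?R = "\<lambda>A v k. \<chi> i j. if j = k then v $ i else A $ i $ j"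
  have R: "((\<lambda>x. ?R (A x) (v x) k) \<longlongrightarrow> ?R A0 v0 k) F" for k
    by (intro vec_tendstoI) (simp add: tendsto_vec_nth A v)
  have "((\<lambda>x. \<chi> k. det (?R (A x) (v x) k) / det (A x)) \<longlongrightarrow> (\<chi> k. det (?R A0 v0 k) / det A0)) F"
    by (intro vec_tendstoI) (simp add: tendsto_divide tendsto_det[OF R] tendsto_det[OF A] det0)
  moreover have "\<forall>\<^sub>F x in F. det (A x) \<noteq> 0"
    using tendsto_imp_eventually_ne[OF tendsto_det[OF A] det0] .
  then have "\<forall>\<^sub>F x in F. (\<chi> k. det (?R (A x) (v x) k) / det (A x)) = mat_inverse (A x) *v v x"
    by eventually_elim (simp add: mat_inverse_mult_cramer)
  ultimately show ?thesis
    unfolding mat_inverse_mult_cramer[OF det0] by (rule Lim_transform_eventually)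
qed

(* A positive definite matrix has trivial kernel, hence is invertible. *)
lemma posdef_det_nonzero:
  fixes C :: "real^'n^'n"
  assumes "posdef C"
  shows "det C \<noteq> 0"
proof
  assume "det C = 0"
  then obtain v where "v \<noteq> 0" "C *v v = 0"
    using invertible_det_nz[of C] invertible_left_inverse[of C] matrix_left_invertible_ker[of C]
    by blast
  then show False using assms unfolding posdef_def by fastforce
qed

lemma tendsto_cov_of:
  assumes "((\<lambda>x. mean_of (Q x)) \<longlongrightarrow> mean_of Q0) F"
    and "((\<lambda>x. smom_of (Q x)) \<longlongrightarrow> smom_of Q0) F"
  shows "((\<lambda>x. cov_of (Q x)) \<longlongrightarrow> cov_of Q0) F"
  unfolding cov_of_def
  by (intro tendsto_diff assms vec_tendstoI) (simp add: tendsto_mult tendsto_vec_nth assms)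

lemma tendsto_qml_U:
  assumes mu: "\<And>k. k \<in> {1..<N} \<Longrightarrow> ((\<lambda>x. mu x k) \<longlongrightarrow> mu0 k) F"
    and S: "\<And>k. k \<in> {1..<N} \<Longrightarrow> ((\<lambda>x. S x k) \<longlongrightarrow> S0 k) F"
    and S0: "\<And>k. k \<in> {1..<N} \<Longrightarrow> posdef (S0 k)"
  shows "((\<lambda>x. qml_U N zs (mu x) (S x)) \<longlongrightarrow> qml_U N zs mu0 S0) F"
  unfolding qml_U_def
proof (intro tendsto_add tendsto_const tendsto_sum)
  fix k assume k: "k \<in> {1..<N}"
  have det0: "det (S0 k) \<noteq> 0" using posdef_det_nonzero[OF S0[OF k]] .
  have res: "((\<lambda>x. zs k - mu x k) \<longlongrightarrow> zs k - mu0 k) F"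
    by (intro tendsto_diff tendsto_const mu k)
  show "((\<lambda>x. ln (det (S x k))) \<longlongrightarrow> ln (det (S0 k))) F"
    by (intro tendsto_ln tendsto_det S k det0)
  show "((\<lambda>x. (zs k - mu x k) \<bullet> (mat_inverse (S x k) *v (zs k - mu x k)))
          \<longlongrightarrow> (zs k - mu0 k) \<bullet> (mat_inverse (S0 k) *v (zs k - mu0 k))) F"
    by (intro tendsto_inner res tendsto_mat_inverse_mult S k det0)
qed

(* Iterated partial derivatives of polynomials of degree <= 2 vanish from order 3 on;
   this case split on the length of the list of directions reflects that. *)
lemma list_cases_by_length:
  obtains "al = []" | l where "al = [l]" | l' l where "al = [l', l]" | a b c r where "al = a # b # c # r"
  by (metis list.exhaust)

lemma partial_coord: "(x + s *\<^sub>R axis l 1) $ i = x $ i + s * (if l = i then 1 else 0)"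
  by (simp add: axis_def)

lemma deriv_affine_product: "((\<lambda>s. (a + s * c) * (b + s * d)) has_real_derivative c * b + d * a) (at 0)"
  by (auto intro!: derivative_eq_intros)

lemma deriv_affine_combination:
  "((\<lambda>s. p * (a + s * c) + q * (b + s * d)) has_real_derivative p * c + q * d) (at 0)"
  by (auto intro!: derivative_eq_intros)

(* The iterated partial derivatives of x |-> x_i * x_j, indexed as in the definition of CP:
   Dprod i j (l # al) is the partial derivative in direction l of Dprod i j al. *)
fun Dprod :: "'d \<Rightarrow> 'd \<Rightarrow> 'd list \<Rightarrow> real^'d \<Rightarrow> real" where
  "Dprod i j [] x = x $ i * x $ j"
| "Dprod i j [l] x = (if l = i then 1 else 0) * x $ j + (if l = j then 1 else 0) * x $ i"
| "Dprod i j [l', l] x =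
     (if l = i then 1 else 0) * (if l' = j then 1 else 0) + (if l = j then 1 else 0) * (if l' = i then 1 else 0)"
| "Dprod i j (a # b # c # r) x = 0"

lemma Dprod_deriv:
  "((\<lambda>s. Dprod i j al (x + s *\<^sub>R axis l 1)) has_real_derivative Dprod i j (l # al) x) (at 0)"
proof (cases al rule: list_cases_by_length)
  case 1 show ?thesis unfolding 1 Dprod.simps partial_coord by (rule deriv_affine_product)
next
  case 2 show ?thesis unfolding 2 Dprod.simps partial_coord by (rule deriv_affine_combination)
qed simp_all

lemma Dprod_continuous: "continuous_on UNIV (Dprod i j al)"
  by (cases al rule: list_cases_by_length; simp only: Dprod.simps[abs_def]; intro continuous_intros)

lemma Dprod_bound: "\<bar>Dprod i j al x\<bar> \<le> 2 * (1 + norm x ^ 2)"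
proof -
  have xi: "\<bar>x $ i\<bar> \<le> norm x" and xj: "\<bar>x $ j\<bar> \<le> norm x"
    by (rule component_le_norm_cart)+
  have norm_le: "norm x \<le> 1 + norm x ^ 2"
    using zero_le_power2[of "norm x - 1"] by (simp add: power2_diff) (smt (verit) zero_le_power2)
  show ?thesis
  proof (cases al rule: list_cases_by_length)
    case 1
    have "\<bar>x $ i * x $ j\<bar> \<le> norm x ^ 2"
      unfolding abs_mult power2_eq_square by (intro mult_mono xi xj) auto
    then show ?thesis using 1 by simp
  next
    case (2 l)
    have "\<bar>Dprod i j al x\<bar> \<le> \<bar>x $ j\<bar> + \<bar>x $ i\<bar>"
      unfolding 2 by (cases "l = i"; cases "l = j") (simp_all add: abs_triangle_ineq)
    then show ?thesis using xi xj norm_le by (smt (verit))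
  next
    case (3 l' l)
    have "\<bar>Dprod i j al x\<bar> \<le> 2"
      unfolding 3 by (cases "l = i"; cases "l = j"; cases "l' = i"; cases "l' = j") simp_all
    then show ?thesis by (smt (verit) zero_le_power2)
  qed simp
qed

lemma CP_prod: "CP n (\<lambda>x::real^'d. x $ i * x $ j)"
  unfolding CP_def
proof (intro exI[of _ "Dprod i j"] conjI allI impI)
  show "poly_growth (Dprod i j al)" for al
    unfolding poly_growth_def using Dprod_bound by blast
qed (simp_all add: Dprod_deriv Dprod_continuous fun_eq_iff)

fun Dcoord :: "'d \<Rightarrow> 'd list \<Rightarrow> real^'d \<Rightarrow> real" where
  "Dcoord i [] x = x $ i"
| "Dcoord i [l] x = (if l = i then 1 else 0)"
| "Dcoord i (a # b # r) x = 0"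

lemma Dcoord_deriv:
  "((\<lambda>s. Dcoord i al (x + s *\<^sub>R axis l 1)) has_real_derivative Dcoord i (l # al) x) (at 0)"
proof (cases al rule: list_cases_by_length)
  case 1
  have "((\<lambda>s. x $ i + s * c) has_real_derivative c) (at 0)" for c
    by (auto intro!: derivative_eq_intros)
  then show ?thesis unfolding 1 Dcoord.simps partial_coord .
qed simp_all

lemma CP_coord: "CP n (\<lambda>x::real^'d. x $ i)"
  unfolding CP_def
proof (intro exI[of _ "Dcoord i"] conjI allI impI)
  fix al :: "'d list"
  show "continuous_on UNIV (Dcoord i al)"
    by (cases al rule: list_cases_by_length; simp only: Dcoord.simps[abs_def]; intro continuous_intros)
  have "\<bar>Dcoord i al x\<bar> \<le> 1 * (1 + norm x ^ 1)" for x
    using component_le_norm_cart[of x i] by (cases al rule: list_cases_by_length) simp_all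
  then show "poly_growth (Dcoord i al)"
    unfolding poly_growth_def by blast
qed (simp_all add: Dcoord_deriv fun_eq_iff)

lemma integrable_ident_of_moment:
  fixes Q :: "'a::{banach, second_countable_topology} measure"
  assumes "prob_space Q" and sets: "sets Q = sets borel"
    and moment: "integrable Q (\<lambda>x. norm x ^ q)" and q: "q \<ge> 1"
  shows "integrable Q (\<lambda>x. x)"
proof (rule Bochner_Integration.integrable_bound[where f = "\<lambda>x. 1 + norm x ^ q"])
  interpret prob_space Q by fact
  show "integrable Q (\<lambda>x. 1 + norm x ^ q)" using moment by simp
  show "(\<lambda>x. x) \<in> borel_measurable Q" using sets by (rule measurable_ident_sets)
  have "norm x \<le> 1 + norm x ^ q" for x :: 'a
  proof (cases "norm x \<le> 1")
    case False
    then have "norm x \<le> norm x ^ q" using q by (intro self_le_power) auto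
    then show ?thesis by simp
  qed (simp add: add_increasing2)
  then show "AE x in Q. norm x \<le> norm (1 + norm x ^ q)" by simp
qed

lemma mean_of_component:
  "integrable Q (\<lambda>x::real^'d. x) \<Longrightarrow> mean_of Q $ i = (\<integral>x. x $ i \<partial>Q)"
  unfolding mean_of_def using integral_bounded_linear[OF bounded_linear_vec_nth, of Q "\<lambda>x. x" i] by simp

locale order_beta_approximation =
  fixes Nobs :: nat and t :: "nat \<Rightarrow> real" and Dth :: "(real^'p) set" and beta :: nat
    and PX :: "real^'p \<Rightarrow> nat \<Rightarrow> real^'d \<Rightarrow> real \<Rightarrow> (real^'d) measure"
    and PY :: "real \<Rightarrow> real^'p \<Rightarrow> nat \<Rightarrow> real^'d \<Rightarrow> real \<Rightarrow> (real^'d) measure"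
  assumes t_incr: "\<And>k. t k < t (Suc k)"
    and beta: "beta \<ge> 1"
    and PX_prob: "\<And>th k s u. th \<in> Dth \<Longrightarrow> prob_space (PX th k s u) \<and> sets (PX th k s u) = sets borel"
    and PX_moments: "\<And>th k s u q. th \<in> Dth \<Longrightarrow> integrable (PX th k s u) (\<lambda>x. norm x ^ q)"
    and PX_cont: "\<And>k s. k + 1 < Nobs \<Longrightarrow>
        continuous_on Dth (\<lambda>th. mean_of (PX th k s (t (Suc k)))) \<and>
        continuous_on Dth (\<lambda>th. smom_of (PX th k s (t (Suc k))))"
    and PX_posdef: "\<And>th k s. th \<in> Dth \<Longrightarrow> k + 1 < Nobs \<Longrightarrow> posdef (cov_of (PX th k s (t (Suc k))))"
    and PY_prob: "\<And>h th k s u. h > 0 \<Longrightarrow> th \<in> Dth \<Longrightarrow>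
        prob_space (PY h th k s u) \<and> sets (PY h th k s u) = sets borel"
    and PY_moments: "\<And>q s. q \<ge> 1 \<Longrightarrow> \<exists>L>0. \<forall>h>0. \<forall>th\<in>Dth. \<forall>k. k + 1 < Nobs \<longrightarrow>
        (\<forall>u\<in>{t k..t (Suc k)}. integrable (PY h th k s u) (\<lambda>x. norm x ^ (2 * q)) \<and>
            (\<integral>x. norm x ^ (2 * q) \<partial>(PY h th k s u)) \<le> L)"
    and weak_order: "\<And>g s. CP (2 * (beta + 1)) g \<Longrightarrow> \<exists>L>0. \<forall>k. k + 1 < Nobs \<longrightarrow>
        (\<forall>th\<in>Dth. \<forall>h>0. \<forall>u\<in>{t k..t (Suc k)}.
           \<bar>(\<integral>x. g x \<partial>(PX th k s u)) - (\<integral>x. g x \<partial>(PY h th k s u))\<bar> \<le> L * h ^ beta)"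
begin

lemma next_observation_time: "t (Suc k) \<in> {t k..t (Suc k)}"
  using t_incr[of k] by simp

lemma weak_order_at_next_observation:
  assumes g: "CP (2 * (beta + 1)) g" and k: "k + 1 < Nobs"
  obtains L where "\<And>th h. th \<in> Dth \<Longrightarrow> h > 0 \<Longrightarrow>
    \<bar>(\<integral>x. g x \<partial>(PX th k s (t (Suc k)))) - (\<integral>x. g x \<partial>(PY h th k s (t (Suc k))))\<bar> \<le> L * h ^ beta"
  using weak_order[OF g, of s] k next_observation_time by blast

(* The predicted means of y approximate those of x at rate h^beta, uniformly in theta;
   the test function is the coordinate x_i, and both laws have a mean. *)
lemma mean_rate:
  assumes k: "k + 1 < Nobs"
  obtains L where "\<And>th h. th \<in> Dth \<Longrightarrow> h > 0 \<Longrightarrow>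
    \<bar>mean_of (PX th k s (t (Suc k))) $ i - mean_of (PY h th k s (t (Suc k))) $ i\<bar> \<le> L * h ^ beta"
proof -
  obtain L where L: "\<And>th h. th \<in> Dth \<Longrightarrow> h > 0 \<Longrightarrow>
      \<bar>(\<integral>x. x $ i \<partial>(PX th k s (t (Suc k)))) - (\<integral>x. x $ i \<partial>(PY h th k s (t (Suc k))))\<bar> \<le> L * h ^ beta"
    using weak_order_at_next_observation[OF CP_coord k] by blast
  obtain L2 where L2: "\<forall>h>0. \<forall>th\<in>Dth. \<forall>k. k + 1 < Nobs \<longrightarrow>
      (\<forall>u\<in>{t k..t (Suc k)}. integrable (PY h th k s u) (\<lambda>x. norm x ^ (2 * 1)) \<and>
          (\<integral>x. norm x ^ (2 * 1) \<partial>(PY h th k s u)) \<le> L2)"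
    using PY_moments[of 1 s] by blast
  have "\<bar>mean_of (PX th k s (t (Suc k))) $ i - mean_of (PY h th k s (t (Suc k))) $ i\<bar> \<le> L * h ^ beta"
    if th: "th \<in> Dth" and h: "h > 0" for th h
  proof -
    have "integrable (PX th k s (t (Suc k))) (\<lambda>x. x)"
      using PX_prob[OF th] PX_moments[OF th, of k s "t (Suc k)" 1]
      by (intro integrable_ident_of_moment[where q = 1]) auto
    moreover have "integrable (PY h th k s (t (Suc k))) (\<lambda>x. x)"
      using PY_prob[OF h th] L2 h th k next_observation_time
      by (intro integrable_ident_of_moment[where q = "2 * 1"]) auto
    ultimately show ?thesis using L[OF th h] by (simp add: mean_of_component)
  qed
  then show ?thesis by (rule that)
qed

(* The same for the second moments, with the test function x_i * x_j. *)
lemma smom_rate: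
  assumes k: "k + 1 < Nobs"
  obtains L where "\<And>th h. th \<in> Dth \<Longrightarrow> h > 0 \<Longrightarrow>
    \<bar>smom_of (PX th k s (t (Suc k))) $ i $ j - smom_of (PY h th k s (t (Suc k))) $ i $ j\<bar> \<le> L * h ^ beta"
proof -
  obtain L where L: "\<And>th h. th \<in> Dth \<Longrightarrow> h > 0 \<Longrightarrow>
      \<bar>(\<integral>x. x $ i * x $ j \<partial>(PX th k s (t (Suc k)))) - (\<integral>x. x $ i * x $ j \<partial>(PY h th k s (t (Suc k))))\<bar>
        \<le> L * h ^ beta"
    using weak_order_at_next_observation[OF CP_prod k] by blast
  show ?thesis using L by (intro that[of L]) (simp add: smom_of_def)
qed

(* Joint convergence of the predicted moments of y: as h -> 0+ and theta -> l, they tend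
   to the moments of x at l (uniform rate plus continuity in theta). *)
lemma moments_tendsto:
  assumes k: "k + 1 < Nobs"
    and h: "(h \<longlongrightarrow> 0) F" "\<forall>\<^sub>F x in F. h x > 0"
    and th: "(th \<longlongrightarrow> l) F" "\<forall>\<^sub>F x in F. th x \<in> Dth" and l: "l \<in> Dth"
  shows "((\<lambda>x. mean_of (PY (h x) (th x) k s (t (Suc k)))) \<longlongrightarrow> mean_of (PX l k s (t (Suc k)))) F"
    and "((\<lambda>x. smom_of (PY (h x) (th x) k s (t (Suc k)))) \<longlongrightarrow> smom_of (PX l k s (t (Suc k)))) F"
proof -
  have mean_X: "((\<lambda>x. mean_of (PX (th x) k s (t (Suc k)))) \<longlongrightarrow> mean_of (PX l k s (t (Suc k)))) F"
    and smom_X: "((\<lambda>x. smom_of (PX (th x) k s (t (Suc k)))) \<longlongrightarrow> smom_of (PX l k s (t (Suc k)))) F"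
    using PX_cont[OF k, of s] continuous_on_tendsto_compose[OF _ th(1) l th(2)] by blast+
  show "((\<lambda>x. mean_of (PY (h x) (th x) k s (t (Suc k)))) \<longlongrightarrow> mean_of (PX l k s (t (Suc k)))) F"
  proof (rule vec_tendstoI)
    fix i
    obtain L where "\<And>y e. y \<in> Dth \<Longrightarrow> e > 0 \<Longrightarrow>
        \<bar>mean_of (PX y k s (t (Suc k))) $ i - mean_of (PY e y k s (t (Suc k))) $ i\<bar> \<le> L * e ^ beta"
      using mean_rate[OF k] by blast
    from tendsto_of_uniform_rate[OF h th(2) tendsto_vec_nth[OF mean_X] this beta]
    show "((\<lambda>x. mean_of (PY (h x) (th x) k s (t (Suc k))) $ i) \<longlongrightarrow> mean_of (PX l k s (t (Suc k))) $ i) F" .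
  qed
  show "((\<lambda>x. smom_of (PY (h x) (th x) k s (t (Suc k)))) \<longlongrightarrow> smom_of (PX l k s (t (Suc k)))) F"
  proof (intro vec_tendstoI)
    fix i j
    obtain L where "\<And>y e. y \<in> Dth \<Longrightarrow> e > 0 \<Longrightarrow>
        \<bar>smom_of (PX y k s (t (Suc k))) $ i $ j - smom_of (PY e y k s (t (Suc k))) $ i $ j\<bar> \<le> L * e ^ beta"
      using smom_rate[OF k] by blast
    from tendsto_of_uniform_rate[OF h th(2) tendsto_vec_nth[OF tendsto_vec_nth[OF smom_X]] this beta]
    show "((\<lambda>x. smom_of (PY (h x) (th x) k s (t (Suc k))) $ i $ j) \<longlongrightarrow> smom_of (PX l k s (t (Suc k))) $ i $ j) F" .
  qed
qed

lemma objective_tendsto: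
  assumes h: "(h \<longlongrightarrow> 0) F" "\<forall>\<^sub>F x in F. h x > 0"
    and th: "(th \<longlongrightarrow> l) F" "\<forall>\<^sub>F x in F. th x \<in> Dth" and l: "l \<in> Dth"
  shows "((\<lambda>x. U_approx PY t Nobs (h x) (th x) zs) \<longlongrightarrow> U_exact PX t Nobs l zs) F"
  unfolding U_approx_def U_exact_def
proof (rule tendsto_qml_U)
  fix k assume "k \<in> {1..<Nobs}"
  then obtain k' where k: "k = Suc k'" and k': "k' + 1 < Nobs" by (cases k) auto
  note moments = moments_tendsto[OF k' h th l, of "zs k'"]
  show "((\<lambda>x. mean_of (PY (h x) (th x) (k - 1) (zs (k - 1)) (t k))) \<longlongrightarrow> mean_of (PX l (k - 1) (zs (k - 1)) (t k))) F"
    using moments(1) unfolding k by simp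
  show "((\<lambda>x. cov_of (PY (h x) (th x) (k - 1) (zs (k - 1)) (t k))) \<longlongrightarrow> cov_of (PX l (k - 1) (zs (k - 1)) (t k))) F"
    using tendsto_cov_of[OF moments] unfolding k by simp
  show "posdef (cov_of (PX l (k - 1) (zs (k - 1)) (t k)))"
    using PX_posdef[OF l k'] unfolding k by simp
qed

lemma minimiser_tendsto:
  assumes Dth: "compact Dth" and x0: "x0 \<in> Dth"
    and unique: "\<And>th. th \<in> Dth \<Longrightarrow> th \<noteq> x0 \<Longrightarrow> U_exact PX t Nobs x0 zs < U_exact PX t Nobs th zs"
    and xh: "\<And>h. h > 0 \<Longrightarrow> xh h \<in> Dth \<and> (\<forall>th\<in>Dth. U_approx PY t Nobs h (xh h) zs \<le> U_approx PY t Nobs h th zs)"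
  shows "(xh \<longlongrightarrow> x0) (at_right 0)"
proof (rule tendsto_at_right_sequentially[where b = 1])
  fix S :: "nat \<Rightarrow> real"
  assume S_pos: "\<And>n. 0 < S n" and "\<And>n. S n < 1" and "decseq S" and S_lim: "S \<longlonglongrightarrow> 0"
  show "(\<lambda>n. xh (S n)) \<longlonglongrightarrow> x0"
  proof (rule argmin_consistency[where U = "\<lambda>th. U_exact PX t Nobs th zs"
        and V = "\<lambda>n th. U_approx PY t Nobs (S n) th zs", OF Dth x0 unique])
    show "(\<lambda>n. U_approx PY t Nobs (S n) x0 zs) \<longlonglongrightarrow> U_exact PX t Nobs x0 zs"
      using x0 S_pos by (intro objective_tendsto S_lim) auto
    fix r :: "nat \<Rightarrow> nat" and l assume "strict_mono r" "l \<in> Dth" "((\<lambda>n. xh (S n)) \<circ> r) \<longlonglongrightarrow> l"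
    then show "(\<lambda>n. U_approx PY t Nobs (S (r n)) (xh (S (r n))) zs) \<longlonglongrightarrow> U_exact PX t Nobs l zs"
      using LIMSEQ_subseq_LIMSEQ[OF S_lim] S_pos xh by (intro objective_tendsto) (auto simp: comp_def)
  qed (use x0 xh S_pos in auto)
qed simp

end

theorem theorem1:
  fixes P :: "'w measure"
    and Nobs :: nat
    and t :: "nat \<Rightarrow> real"
    and Dth :: "(real^'p) set"
    and theta0 :: "real^'p"
    and beta :: nat
    and z :: "nat \<Rightarrow> 'w \<Rightarrow> real^'d"
    and PX :: "real^'p \<Rightarrow> nat \<Rightarrow> real^'d \<Rightarrow> real \<Rightarrow> (real^'d) measure"
    and PY :: "real \<Rightarrow> real^'p \<Rightarrow> nat \<Rightarrow> real^'d \<Rightarrow> real \<Rightarrow> (real^'d) measure"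
    and thetahat :: "'w \<Rightarrow> real^'p"
    and thetahat_h :: "real \<Rightarrow> 'w \<Rightarrow> real^'p"
  assumes P: "prob_space P"
    and t_incr: "\<And>k. t k < t (Suc k)"
    and Dth: "compact Dth" "theta0 \<in> Dth"
    and beta: "beta \<ge> 1"
    and z_meas: "\<And>k. k < Nobs \<Longrightarrow> z k \<in> borel_measurable P"
    \<comment> \<open>transition laws of the exact solution x\<close>
    and PX_prob: "\<And>th k s u. th \<in> Dth \<Longrightarrow> prob_space (PX th k s u) \<and> sets (PX th k s u) = sets borel"
    and PX_start: "\<And>th k s. th \<in> Dth \<Longrightarrow> PX th k s (t k) = return borel s"
    and PX_moments: "\<And>th k s u q. th \<in> Dth \<Longrightarrow> integrable (PX th k s u) (\<lambda>x. norm x ^ q)"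
    and PX_cont: "\<And>k s. k + 1 < Nobs \<Longrightarrow>
        continuous_on Dth (\<lambda>th. mean_of (PX th k s (t (Suc k)))) \<and>
        continuous_on Dth (\<lambda>th. smom_of (PX th k s (t (Suc k))))"
    and PX_posdef: "\<And>th k s. th \<in> Dth \<Longrightarrow> k + 1 < Nobs \<Longrightarrow> posdef (cov_of (PX th k s (t (Suc k))))"
    \<comment> \<open>laws of the order-beta approximation y, restarted at the observations\<close>
    and PY_prob: "\<And>h th k s u. h > 0 \<Longrightarrow> th \<in> Dth \<Longrightarrow>
        prob_space (PY h th k s u) \<and> sets (PY h th k s u) = sets borel"
    and PY_restart: "\<And>h th k s. h > 0 \<Longrightarrow> th \<in> Dth \<Longrightarrow> PY h th k s (t k) = return borel s"
    and PY_moments: "\<And>q s. q \<ge> 1 \<Longrightarrow> \<exists>L>0. \<forall>h>0. \<forall>th\<in>Dth. \<forall>k. k + 1 < Nobs \<longrightarrow>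
        (\<forall>u\<in>{t k..t (Suc k)}. integrable (PY h th k s u) (\<lambda>x. norm x ^ (2 * q)) \<and>
            (\<integral>x. norm x ^ (2 * q) \<partial>(PY h th k s u)) \<le> L)"
    and weak_order: "\<And>g s. CP (2 * (beta + 1)) g \<Longrightarrow> \<exists>L>0. \<forall>k. k + 1 < Nobs \<longrightarrow>
        (\<forall>th\<in>Dth. \<forall>h>0. \<forall>u\<in>{t k..t (Suc k)}.
           \<bar>(\<integral>x. g x \<partial>(PX th k s u)) - (\<integral>x. g x \<partial>(PY h th k s u))\<bar> \<le> L * h ^ beta)"
    and PY_smom: "\<And>h k s. h > 0 \<Longrightarrow> k + 1 < Nobs \<Longrightarrow>
        (\<forall>th\<in>Dth. posdef (smom_of (PY h th k s (t (Suc k))))) \<and>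
        continuous_on Dth (\<lambda>th. smom_of (PY h th k s (t (Suc k))))"
    \<comment> \<open>the exact QML estimator: the (unique) minimiser of U_M over Dth\<close>
    and thetahat: "\<And>w. w \<in> space P \<Longrightarrow> thetahat w \<in> Dth \<and>
        (\<forall>th\<in>Dth. U_exact PX t Nobs (thetahat w) (\<lambda>k. z k w) \<le> U_exact PX t Nobs th (\<lambda>k. z k w)) \<and>
        (\<forall>th\<in>Dth. U_exact PX t Nobs th (\<lambda>k. z k w) = U_exact PX t Nobs (thetahat w) (\<lambda>k. z k w)
                   \<longrightarrow> th = thetahat w)"
    and thetahat_meas: "thetahat \<in> borel_measurable P"
    \<comment> \<open>the order-beta QML estimator: a minimiser of U_{M,h} over Dth\<close>
    and thetahat_h: "\<And>h w. h > 0 \<Longrightarrow> w \<in> space P \<Longrightarrow> thetahat_h h w \<in> Dth \<and>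
        (\<forall>th\<in>Dth. U_approx PY t Nobs h (thetahat_h h w) (\<lambda>k. z k w) \<le> U_approx PY t Nobs h th (\<lambda>k. z k w))"
    and thetahat_h_meas: "\<And>h. h > 0 \<Longrightarrow> thetahat_h h \<in> borel_measurable P"
  shows "(\<forall>w\<in>space P. ((\<lambda>h. norm (thetahat_h h w - thetahat w)) \<longlongrightarrow> 0) (at_right 0)) \<and>
         ((\<lambda>h. \<integral>w. norm (thetahat_h h w - thetahat w) \<partial>P) \<longlongrightarrow> 0) (at_right 0)"
proof -
  interpret order_beta_approximation Nobs t Dth beta PX PY
    by unfold_locales (fact t_incr beta PX_prob PX_moments PX_cont PX_posdef PY_prob PY_moments weak_order)+
  have consistent: "((\<lambda>h. thetahat_h h w) \<longlongrightarrow> thetahat w) (at_right 0)" if w: "w \<in> space P" for w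
  proof (rule minimiser_tendsto[OF Dth(1)])
    show "\<And>th. th \<in> Dth \<Longrightarrow> th \<noteq> thetahat w \<Longrightarrow>
        U_exact PX t Nobs (thetahat w) (\<lambda>k. z k w) < U_exact PX t Nobs th (\<lambda>k. z k w)"
      using thetahat[OF w] by force
  qed (use thetahat[OF w] thetahat_h[OF _ w] in auto)
  have "\<forall>w\<in>space P. ((\<lambda>h. norm (thetahat_h h w - thetahat w)) \<longlongrightarrow> 0) (at_right 0)"
    using consistent by (simp add: tendsto_norm_zero LIM_zero)
  moreover have "((\<lambda>h. \<integral>w. norm (thetahat_h h w - thetahat w) \<partial>P) \<longlongrightarrow> 0) (at_right 0)"
    using P thetahat thetahat_h thetahat_meas thetahat_h_meas consistent compact_imp_bounded[OF Dth(1)]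
    by (intro tendsto_integral_norm_diff_at_right[where K = Dth]) (auto simp: prob_space.finite_measure)
  ultimately show ?thesis ..
qed

end
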